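(* Let $n\ge3$. Then $d'_{L_n^2}=n-\left\lceil\frac n5\right\rceil$.
   Context: $L_n^2$ is the graph on $\{1,\dots,n\}$ with edges $\{i,i+1\}$ and $\{i,i+2\}$. A bouquet in a graph $G$ is a subgraph that is a star with vertex set $\{w,z_1,\dots,z_t\}$, $t\ge1$, and edges $\{w,z_i\}$ (all edges of $G$); $w$ is its root and $z_1,\dots,z_t$ its flowers. A set $\mathcal B=\{B_1,\dots,B_r\}$ of bouquets of $G$ is semi-strongly disjoint if $V(B_i)\cap V(B_j)=\emptyset$ for $i\ne j$ and no two roots of bouquets in $\mathcal B$ are adjacent in $G$. $\mathcal F(\mathcal B)$ denotes the set of all flowers of bouquets in $\mathcal B$, and $d'_G=\max\{|\mathcal F(\mathcal B)|:\mathcal B$ a semi-strongly disjoint set of bouquets of $G\}$. *)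

theory Defs
  imports Complex_Main
begin

definition L2_adj :: "nat \<Rightarrow> nat \<Rightarrow> nat \<Rightarrow> bool" where
  "L2_adj n i j \<longleftrightarrow> i \<in> {1..n} \<and> j \<in> {1..n} \<and>
     (j = i + 1 \<or> i = j + 1 \<or> j = i + 2 \<or> i = j + 2)"

(* A bouquet in a graph with vertex set V and adjacency E is represented by a pair
   (w, Z): root w and (nonempty) set of flowers Z, with every {w,z} an edge. *)
definition is_bouquet :: "'a set \<Rightarrow> ('a \<Rightarrow> 'a \<Rightarrow> bool) \<Rightarrow> 'a \<times> 'a set \<Rightarrow> bool" where
  "is_bouquet V E B \<longleftrightarrow> fst B \<in> V \<and> snd B \<noteq> {} \<and> finite (snd B) \<and>
     snd B \<subseteq> V \<and> (\<forall>z\<in>snd B. E (fst B) z)"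

definition bouquet_vertices :: "'a \<times> 'a set \<Rightarrow> 'a set" where
  "bouquet_vertices B = insert (fst B) (snd B)"

definition semi_strongly_disjoint ::
  "'a set \<Rightarrow> ('a \<Rightarrow> 'a \<Rightarrow> bool) \<Rightarrow> ('a \<times> 'a set) set \<Rightarrow> bool" where
  "semi_strongly_disjoint V E \<B> \<longleftrightarrow> finite \<B> \<and> (\<forall>B\<in>\<B>. is_bouquet V E B) \<and>
     (\<forall>B\<in>\<B>. \<forall>B'\<in>\<B>. B \<noteq> B' \<longrightarrow>
        bouquet_vertices B \<inter> bouquet_vertices B' = {} \<and> \<not> E (fst B) (fst B'))"

definition flowers :: "('a \<times> 'a set) set \<Rightarrow> 'a set" where
  "flowers \<B> = (\<Union>B\<in>\<B>. snd B)"

definition d_prime :: "'a set \<Rightarrow> ('a \<Rightarrow> 'a \<Rightarrow> bool) \<Rightarrow> nat" where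
  "d_prime V E = Max {card (flowers \<B>) | \<B>. semi_strongly_disjoint V E \<B>}"

end

theory Submission
  imports Defs
begin

text \<open>
  Upper bound: no root is a flower and every flower is adjacent to a root, so the
  non-flowers dominate \<open>L\<^sub>n\<^sup>2\<close>; as closed neighbourhoods there have at most five
  vertices, at least \<open>\<lceil>n/5\<rceil>\<close> vertices are not flowers.
  Lower bound: the bouquet with root \<open>n+3\<close> and flowers \<open>n+1, n+2, n+4, n+5\<close> can be
  added to any semi-strongly disjoint family in \<open>L\<^sub>n\<^sup>2\<close>, giving four new flowers on
  five new vertices; this reduces the construction to \<open>3 \<le> n \<le> 7\<close>.
\<close>

lemma nat_ceiling_divide_5: "nat \<lceil>real n / 5\<rceil> = (n + 4) div 5"
proof -
  define q where "q = (n + 4) div 5"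
  have "n \<le> 5 * q" "5 * q < n + 5"
    unfolding q_def by presburger+
  then have "real q - 1 < real n / 5" "real n / 5 \<le> real q"
    by linarith+
  then have "\<lceil>real n / 5\<rceil> = int q"
    by (simp add: ceiling_eq_iff)
  then show ?thesis
    by (simp add: q_def)
qed

definition dominating_set :: "'a set \<Rightarrow> ('a \<Rightarrow> 'a \<Rightarrow> bool) \<Rightarrow> 'a set \<Rightarrow> bool" where
  "dominating_set V E U \<longleftrightarrow> U \<subseteq> V \<and> (\<forall>v\<in>V. v \<in> U \<or> (\<exists>u\<in>U. E u v))"

lemma semi_strongly_disjoint_root_not_flower:
  assumes ssd: "semi_strongly_disjoint V E \<B>"
    and irrefl: "\<And>v. \<not> E v v"
    and B: "B \<in> \<B>"
  shows "fst B \<notin> flowers \<B>"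
proof
  assume "fst B \<in> flowers \<B>"
  then obtain B' where B': "B' \<in> \<B>" "fst B \<in> snd B'"
    by (auto simp: flowers_def)
  show False
  proof (cases "B' = B")
    case True
    then show False
      using ssd B B' irrefl by (auto simp: semi_strongly_disjoint_def is_bouquet_def)
  next
    case False
    then show False
      using ssd B B' by (auto simp: semi_strongly_disjoint_def bouquet_vertices_def)
  qed
qed

lemma semi_strongly_disjoint_nonflowers_dominating:
  assumes ssd: "semi_strongly_disjoint V E \<B>"
    and irrefl: "\<And>v. \<not> E v v"
  shows "dominating_set V E (V - flowers \<B>)"
  unfolding dominating_set_def
proof (intro conjI ballI)
  fix v assume v: "v \<in> V"
  show "v \<in> V - flowers \<B> \<or> (\<exists>u\<in>V - flowers \<B>. E u v)"
  proof (cases "v \<in> flowers \<B>")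
    case True
    then obtain B where B: "B \<in> \<B>" "v \<in> snd B"
      by (auto simp: flowers_def)
    then have "fst B \<in> V" "E (fst B) v"
      using ssd by (auto simp: semi_strongly_disjoint_def is_bouquet_def)
    moreover have "fst B \<notin> flowers \<B>"
      using semi_strongly_disjoint_root_not_flower[OF ssd irrefl B(1)] .
    ultimately show ?thesis
      by blast
  qed (use v in blast)
qed blast

lemma L2_dominating_set_card:
  assumes "dominating_set {1..n} (L2_adj n) U"
  shows "n \<le> 5 * card U"
proof -
  have finU: "finite U"
    using assms finite_subset by (auto simp: dominating_set_def)
  have "{1..n} \<subseteq> (\<Union>u\<in>U. {u - 2..u + 2})"
  proof
    fix v assume "v \<in> {1..n}"
    then obtain u where "u \<in> U" "v = u \<or> L2_adj n u v"
      using assms unfolding dominating_set_def by blast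
    moreover from this(2) have "v \<in> {u - 2..u + 2}"
      by (auto simp: L2_adj_def)
    ultimately show "v \<in> (\<Union>u\<in>U. {u - 2..u + 2})"
      by blast
  qed
  then have "card {1..n} \<le> card (\<Union>u\<in>U. {u - 2..u + 2})"
    using finU by (intro card_mono) auto
  then have "n \<le> card (\<Union>u\<in>U. {u - 2..u + 2})"
    by simp
  also have "\<dots> \<le> (\<Sum>u\<in>U. card {u - 2..u + 2})"
    by (rule card_UN_le[OF finU])
  also have "\<dots> \<le> (\<Sum>u\<in>U. 5)"
    by (rule sum_mono) simp
  finally show ?thesis
    by simp
qed

lemma L2_flowers_card_le:
  assumes ssd: "semi_strongly_disjoint {1..n} (L2_adj n) \<B>"
  shows "card (flowers \<B>) \<le> n - (n + 4) div 5"
proof -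
  have sub: "flowers \<B> \<subseteq> {1..n}"
    using ssd by (auto simp: semi_strongly_disjoint_def is_bouquet_def flowers_def)
  have "dominating_set {1..n} (L2_adj n) ({1..n} - flowers \<B>)"
    using ssd by (rule semi_strongly_disjoint_nonflowers_dominating) (simp add: L2_adj_def)
  then have "n \<le> 5 * card ({1..n} - flowers \<B>)"
    by (rule L2_dominating_set_card)
  moreover have "card ({1..n} - flowers \<B>) = n - card (flowers \<B>)"
    using sub by (simp add: card_Diff_subset finite_subset)
  moreover have "card (flowers \<B>) \<le> n"
    using card_mono[OF _ sub] by simp
  ultimately show ?thesis
    by linarith
qed

lemma semi_strongly_disjoint_extend_graph:
  assumes ssd: "semi_strongly_disjoint V E \<B>"
    and "V \<subseteq> V'"
    and agree: "\<And>x y. x \<in> V \<Longrightarrow> y \<in> V \<Longrightarrow> E' x y = E x y"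
  shows "semi_strongly_disjoint V' E' \<B>"
proof -
  have "is_bouquet V' E' B" if "B \<in> \<B>" for B
    using that ssd \<open>V \<subseteq> V'\<close> agree
    by (auto simp: semi_strongly_disjoint_def is_bouquet_def subset_iff)
  moreover have "\<not> E' (fst B) (fst B')" if "B \<in> \<B>" "B' \<in> \<B>" "B \<noteq> B'" for B B'
    using that ssd agree by (auto simp: semi_strongly_disjoint_def is_bouquet_def)
  ultimately show ?thesis
    using ssd by (simp add: semi_strongly_disjoint_def)
qed

lemma semi_strongly_disjoint_insert:
  assumes "semi_strongly_disjoint V E \<B>"
    and "is_bouquet V E N"
    and "\<And>B. B \<in> \<B> \<Longrightarrow> bouquet_vertices N \<inter> bouquet_vertices B = {}
                \<and> \<not> E (fst N) (fst B) \<and> \<not> E (fst B) (fst N)"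
  shows "semi_strongly_disjoint V E (insert N \<B>)"
  using assms by (auto simp: semi_strongly_disjoint_def)

lemma L2_semi_strongly_disjoint_append_block:
  assumes ssd: "semi_strongly_disjoint {1..n} (L2_adj n) \<B>"
  defines "N \<equiv> (n + 3, {n + 1, n + 2, n + 4, n + 5})"
  shows "semi_strongly_disjoint {1..n + 5} (L2_adj (n + 5)) (insert N \<B>)"
    and "card (flowers (insert N \<B>)) = card (flowers \<B>) + 4"
proof -
  have old: "bouquet_vertices B \<subseteq> {1..n}" if "B \<in> \<B>" for B
    using ssd that by (auto simp: semi_strongly_disjoint_def is_bouquet_def bouquet_vertices_def)
  show "semi_strongly_disjoint {1..n + 5} (L2_adj (n + 5)) (insert N \<B>)"
  proof (rule semi_strongly_disjoint_insert)
    show "semi_strongly_disjoint {1..n + 5} (L2_adj (n + 5)) \<B>"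
      using ssd by (rule semi_strongly_disjoint_extend_graph) (auto simp: L2_adj_def)
    show "is_bouquet {1..n + 5} (L2_adj (n + 5)) N"
      by (auto simp: N_def is_bouquet_def L2_adj_def)
    fix B assume "B \<in> \<B>"
    then show "bouquet_vertices N \<inter> bouquet_vertices B = {}
        \<and> \<not> L2_adj (n + 5) (fst N) (fst B) \<and> \<not> L2_adj (n + 5) (fst B) (fst N)"
      using old[of B] by (fastforce simp: N_def bouquet_vertices_def L2_adj_def)
  qed
  have "flowers \<B> \<subseteq> {1..n}"
    using old by (force simp: flowers_def bouquet_vertices_def)
  then have "card (snd N \<union> flowers \<B>) = card (snd N) + card (flowers \<B>)"
    by (intro card_Un_disjoint) (auto simp: N_def finite_subset)
  then show "card (flowers (insert N \<B>)) = card (flowers \<B>) + 4"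
    by (simp add: flowers_def N_def)
qed

lemma L2_flowers_card_attained:
  assumes "3 \<le> n"
  shows "\<exists>\<B>. semi_strongly_disjoint {1..n} (L2_adj n) \<B> \<and> card (flowers \<B>) = n - (n + 4) div 5"
  using assms
proof (induction n rule: less_induct)
  case (less n)
  show ?case
  proof (cases "n \<le> 7")
    case True
    have "n = 3 \<or> n = 4 \<or> n = 5 \<or> n = 6 \<or> n = 7"
      using True less.prems by auto
    then show ?thesis
    proof (elim disjE)
      assume "n = 3"
      then show ?thesis
        by (intro exI[of _ "{(2, {1, 3})}"])
          (auto simp: semi_strongly_disjoint_def is_bouquet_def L2_adj_def flowers_def)
    next
      assume "n = 4"
      then show ?thesis
        by (intro exI[of _ "{(2, {1, 3, 4})}"])
          (auto simp: semi_strongly_disjoint_def is_bouquet_def L2_adj_def flowers_def)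
    next
      assume "n = 5"
      then show ?thesis
        by (intro exI[of _ "{(3, {1, 2, 4, 5})}"])
          (auto simp: semi_strongly_disjoint_def is_bouquet_def L2_adj_def flowers_def)
    next
      assume "n = 6"
      then show ?thesis
        by (intro exI[of _ "{(3, {1, 2, 4, 5})}"])
          (auto simp: semi_strongly_disjoint_def is_bouquet_def L2_adj_def flowers_def)
    next
      assume "n = 7"
      then show ?thesis
        by (intro exI[of _ "{(3, {1, 2, 4, 5}), (6, {7})}"])
          (auto simp: semi_strongly_disjoint_def is_bouquet_def L2_adj_def flowers_def
            bouquet_vertices_def)
    qed
  next
    case False
    define m where "m = n - 5"
    have n: "n = m + 5" and "3 \<le> m"
      using False by (simp_all add: m_def)
    then obtain \<B> where ssd: "semi_strongly_disjoint {1..m} (L2_adj m) \<B>"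
        and card: "card (flowers \<B>) = m - (m + 4) div 5"
      using less.IH[of m] by auto
    have "(m + 5) - (m + 5 + 4) div 5 = card (flowers \<B>) + 4"
      using card by simp
    then show ?thesis
      using L2_semi_strongly_disjoint_append_block[OF ssd] n by metis
  qed
qed

lemma d_prime_eqI:
  assumes "semi_strongly_disjoint V E \<B>" "card (flowers \<B>) = k"
    and "\<And>\<B>. semi_strongly_disjoint V E \<B> \<Longrightarrow> card (flowers \<B>) \<le> k"
  shows "d_prime V E = k"
proof -
  let ?S = "{card (flowers \<B>) | \<B>. semi_strongly_disjoint V E \<B>}"
  have "?S \<subseteq> {..k}"
    using assms(3) by auto
  then have "finite ?S"
    by (rule finite_subset) simp
  moreover have "k \<in> ?S"
    using assms(1,2) by auto
  ultimately show ?thesis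
    unfolding d_prime_def using assms(3) by (intro Max_eqI) auto
qed

theorem proposition4p3:
  fixes n :: nat
  assumes "n \<ge> 3"
  shows "d_prime {1..n} (L2_adj n) = n - nat (ceiling (real n / 5))"
proof -
  obtain \<B> where "semi_strongly_disjoint {1..n} (L2_adj n) \<B>"
      and "card (flowers \<B>) = n - (n + 4) div 5"
    using L2_flowers_card_attained[OF assms] by blast
  then show ?thesis
    unfolding nat_ceiling_divide_5 using L2_flowers_card_le by (rule d_prime_eqI)
qed

end
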